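(* Let $A\in\mathbb{R}^{m\times N}$, $\eta\ge0$, let $x\in\mathbb{R}^N$ be nonzero, let $k\in\{1,\dots,N\}$, and let $y=Ax+\varepsilon$ with $\lVert\varepsilon\rVert_2\le\eta$. Let $1<q\le\infty$ and set $C_q(k,x)=\left(4k^{1-1/q}+s_q(x)^{1-1/q}\right)^{q/(q-1)}$. If $\rho_{q,C_q(k,x)}(A)>0$, then any solution $\hat x$ of $$\min_{z\in\mathbb{R}^N\setminus\{0\}}\frac{\lVert z\rVert_1}{\lVert z\rVert_q}\quad\text{subject to}\quad\lVert y-Az\rVert_2\le\eta$$ obeys $$\lVert\hat x-x\rVert_q\le\frac{2\eta}{\rho_{q,C_q(k,x)}(A)}+k^{1/q-1}\sigma_{k,1}(x),$$ $$\lVert\hat x-x\rVert_1\le\frac{\left(4k^{1-1/q}+2s_q(x)^{1-1/q}\right)\eta}{\rho_{q,C_q(k,x)}(A)}+\left(4+(s_q(x)/k)^{1-1/q}\right)\sigma_{k,1}(x).$$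
   Context: For nonzero $z\in\mathbb{R}^N$ and $q\in(1,\infty)$, $s_q(z)=\left(\lVert z\rVert_1/\lVert z\rVert_q\right)^{q/(q-1)}$ (so $s_q(z)^{1-1/q}=\lVert z\rVert_1/\lVert z\rVert_q$), and $s_\infty(z)=\lVert z\rVert_1/\lVert z\rVert_\infty$. For real $s\ge1$, $\rho_{q,s}(A)=\min\{\lVert Az\rVert_2/\lVert z\rVert_q: z\ne0,\ s_q(z)\le s\}$. For $q=\infty$ interpret $q/(q-1)=1$, $1-1/q=1$, $1/q-1=-1$. $\sigma_{k,1}(x)=\inf\{\lVert x-z\rVert_1: z\in\mathbb{R}^N \text{ has at most } k \text{ nonzero entries}\}$ is the $\ell_1$-error of best $k$-term approximation. *)

theory Defs
  imports "HOL-Analysis.Analysis"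
begin

text \<open>Vectors in R^N are represented as real^'n (N = CARD('n)), matrices
A in R^(m x N) as real^'n^'m, with A *v z the matrix-vector product.\<close>

definition l1norm :: "real^'n \<Rightarrow> real" where
  "l1norm z = (\<Sum>i\<in>UNIV. \<bar>z $ i\<bar>)"

definition lqnorm :: "ereal \<Rightarrow> real^'n \<Rightarrow> real" where
  "lqnorm q z = (if q = \<infinity> then Max (range (\<lambda>i. \<bar>z $ i\<bar>))
     else (\<Sum>i\<in>UNIV. \<bar>z $ i\<bar> powr real_of_ereal q) powr (1 / real_of_ereal q))"

definition qconj :: "ereal \<Rightarrow> real" where
  "qconj q = (if q = \<infinity> then 1 else real_of_ereal q / (real_of_ereal q - 1))"

definition qexp :: "ereal \<Rightarrow> real" where
  "qexp q = (if q = \<infinity> then 1 else 1 - 1 / real_of_ereal q)"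

definition sq :: "ereal \<Rightarrow> real^'n \<Rightarrow> real" where
  "sq q z = (l1norm z / lqnorm q z) powr qconj q"

definition rho :: "ereal \<Rightarrow> real \<Rightarrow> real^'n^'m \<Rightarrow> real" where
  "rho q s A = Inf {norm (A *v z) / lqnorm q z | z. z \<noteq> 0 \<and> sq q z \<le> s}"

definition sigma1 :: "nat \<Rightarrow> real^'n \<Rightarrow> real" where
  "sigma1 k x = Inf {l1norm (x - z) | z. card {i. z $ i \<noteq> 0} \<le> k}"

definition Cq :: "ereal \<Rightarrow> nat \<Rightarrow> real^'n \<Rightarrow> real" where
  "Cq q k x = (4 * real k powr qexp q + sq q x powr qexp q) powr qconj q"

end

theory Submission
  imports Defs
begin

text \<open>Write h = xhat - x and r = s_q(x)^(1-1/q) = ||x||_1 / ||x||_q. Minimality of the ratio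
||z||_1 / ||z||_q at xhat, combined with Minkowski's inequality, gives
||x + h||_1 <= ||x||_1 + r ||h||_q. Splitting the coordinates along the support S of any
k-sparse z and applying Hoelder's inequality on S turns this into the cone condition
||h||_1 <= (2 k^(1-1/q) + r) ||h||_q + 2 ||x - z||_1. Now either ||x - z||_1 <= k^(1-1/q) ||h||_q,
so that ||h||_1 <= (4 k^(1-1/q) + r) ||h||_q, i.e. s_q(h) <= C_q(k,x), and the definition of rho
together with ||A h||_2 <= 2 eta gives ||h||_q <= 2 eta / rho; or ||h||_q is already below
k^(1/q-1) ||x - z||_1. Taking the infimum over z yields the l_q bound, and inserting it into
the cone condition yields the l_1 bound.\<close>

lemma convex_on_powr_nonneg:
  assumes "p \<ge> 1"
  shows "convex_on {0..} (\<lambda>x::real. x powr p)"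
proof (rule convex_on_linorderI)
  fix t x y :: real
  assume t: "0 < t" "t < 1" and xy: "x \<in> {0..}" "y \<in> {0..}" "x < y"
  show "((1 - t) *\<^sub>R x + t *\<^sub>R y) powr p \<le> (1 - t) * x powr p + t * y powr p"
  proof (cases "x = 0")
    case True
    have "t powr p \<le> t"
      using powr_mono'[of 1 p t] t assms by simp
    then show ?thesis
      using True xy t by (simp add: powr_mult mult_right_mono)
  next
    case False
    then show ?thesis
      using convex_onD[OF powr_convex[OF assms], of t x y] t xy by simp
  qed
qed (simp add: convex_real_interval)

lemma sum_le_card_powr_mult_sum_powr:
  fixes f :: "'a \<Rightarrow> real"
  assumes "finite S" "p \<ge> 1" "\<And>i. i \<in> S \<Longrightarrow> f i \<ge> 0"
  shows "(\<Sum>i\<in>S. f i) \<le> real (card S) powr (1 - 1/p) * (\<Sum>i\<in>S. f i powr p) powr (1/p)"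
proof (cases "S = {}")
  case True
  then show ?thesis by simp
next
  case False
  define n where "n = real (card S)"
  have n: "n > 0"
    using False assms(1) by (simp add: n_def card_gt_0_iff)
  have "(\<Sum>i\<in>S. (1/n) *\<^sub>R f i) powr p \<le> (\<Sum>i\<in>S. (1/n) * f i powr p)"
    by (rule convex_on_sum[OF assms(1) False convex_on_powr_nonneg])
      (use assms n in \<open>auto simp: n_def\<close>)
  then have "(\<Sum>i\<in>S. f i) powr p / n powr p \<le> (\<Sum>i\<in>S. f i powr p) / n"
    using n assms
    by (simp add: sum_divide_distrib[symmetric] sum_distrib_left[symmetric] powr_divide sum_nonneg)
  then have jensen: "(\<Sum>i\<in>S. f i) powr p \<le> n powr (p - 1) * (\<Sum>i\<in>S. f i powr p)"
    using n by (simp add: field_simps powr_diff)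
  have "(\<Sum>i\<in>S. f i) = ((\<Sum>i\<in>S. f i) powr p) powr (1/p)"
    using assms by (simp add: powr_powr sum_nonneg)
  also have "\<dots> \<le> (n powr (p - 1) * (\<Sum>i\<in>S. f i powr p)) powr (1/p)"
    using jensen assms by (intro powr_mono2) auto
  also have "\<dots> = n powr (1 - 1/p) * (\<Sum>i\<in>S. f i powr p) powr (1/p)"
    using n assms by (simp add: powr_mult powr_powr sum_nonneg diff_divide_distrib)
  finally show ?thesis
    by (simp add: n_def)
qed

lemma one_le_ereal_cases:
  assumes "1 \<le> (q::ereal)"
  obtains "q = \<infinity>" | p where "q = ereal p" "p \<ge> 1"
  using assms by (cases q) auto

lemma lqnorm_ereal: "lqnorm (ereal p) z = (\<Sum>i\<in>UNIV. \<bar>z $ i\<bar> powr p) powr (1/p)"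
  by (simp add: lqnorm_def)

lemma lqnorm_infinity: "lqnorm \<infinity> z = Max (range (\<lambda>i. \<bar>z $ i\<bar>))"
  by (simp add: lqnorm_def)

lemma abs_le_lqnorm_infinity: "\<bar>z $ i\<bar> \<le> lqnorm \<infinity> z"
  unfolding lqnorm_infinity by (rule Max_ge) auto

lemma lqnorm_infinity_attained: "\<exists>j. lqnorm \<infinity> z = \<bar>z $ j\<bar>"
proof -
  have "Max (range (\<lambda>i. \<bar>z $ i\<bar>)) \<in> range (\<lambda>i. \<bar>z $ i\<bar>)"
    by (rule Max_in) auto
  then show ?thesis
    unfolding lqnorm_infinity by (metis rangeE)
qed

lemma lqnorm_nonneg: "lqnorm q (z::real^'n) \<ge> 0"
proof (cases "q = \<infinity>")
  case True
  then show ?thesis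
    using abs_le_lqnorm_infinity[of z] by (meson abs_ge_zero order_trans)
qed (simp add: lqnorm_def)

lemma lqnorm_zero [simp]: "lqnorm q (0::real^'n) = 0"
  by (simp add: lqnorm_def)

lemma lqnorm_pos:
  assumes "1 \<le> q" "z \<noteq> 0"
  shows "lqnorm q (z::real^'n) > 0"
proof -
  obtain j where j: "z $ j \<noteq> 0"
    using assms(2) by (metis vec_eq_iff zero_index)
  from assms(1) show ?thesis
  proof (cases rule: one_le_ereal_cases)
    case 1
    then show ?thesis
      using j abs_le_lqnorm_infinity[of z j] by simp
  next
    case (2 p)
    have "0 < \<bar>z $ j\<bar> powr p"
      using j by simp
    also have "\<dots> \<le> (\<Sum>i\<in>UNIV. \<bar>z $ i\<bar> powr p)"
      by (rule member_le_sum) auto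
    finally show ?thesis
      using 2 by (simp add: lqnorm_ereal)
  qed
qed

lemma sum_powr_div_lqnorm:
  assumes "p > 0" "lqnorm (ereal p) z \<noteq> 0"
  shows "(\<Sum>i\<in>UNIV. (\<bar>z $ i\<bar> / lqnorm (ereal p) z) powr p) = 1"
proof -
  have "lqnorm (ereal p) z powr p = (\<Sum>i\<in>UNIV. \<bar>z $ i\<bar> powr p)"
    using assms(1) by (simp add: lqnorm_ereal powr_powr sum_nonneg)
  moreover from this have "(\<Sum>i\<in>UNIV. \<bar>z $ i\<bar> powr p) \<noteq> 0"
    using assms(2) by auto
  ultimately show ?thesis
    using assms by (simp add: powr_divide sum_divide_distrib[symmetric])
qed

lemma lqnorm_triangle_ereal:
  fixes u v :: "real^'n"
  assumes p: "p \<ge> 1"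
  shows "lqnorm (ereal p) (u + v) \<le> lqnorm (ereal p) u + lqnorm (ereal p) v"
proof (cases "u = 0 \<or> v = 0")
  case True
  then show ?thesis by (auto simp: lqnorm_nonneg)
next
  case False
  define a b where "a = lqnorm (ereal p) u" and "b = lqnorm (ereal p) v"
  have a: "a > 0" and b: "b > 0"
    using False p lqnorm_pos[of "ereal p"] by (auto simp: a_def b_def)
  txt \<open>Normalise u and v to unit norm; convexity of (\<lambda>s. s powr p) then bounds the normalised
    sum of powers of u + v by 1.\<close>
  define t where "t = b / (a + b)"
  have t: "0 \<le> t" "t \<le> 1"
    using a b by (auto simp: t_def)
  have split: "\<bar>(u + v) $ i\<bar> / (a + b) \<le> (1 - t) * (\<bar>u $ i\<bar> / a) + t * (\<bar>v $ i\<bar> / b)" for i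
  proof -
    have "1 - t = a / (a + b)"
      using a b by (simp add: t_def field_simps)
    then have "(1 - t) * (\<bar>u $ i\<bar> / a) + t * (\<bar>v $ i\<bar> / b) = (\<bar>u $ i\<bar> + \<bar>v $ i\<bar>) / (a + b)"
      using a b by (simp add: t_def add_divide_distrib)
    then show ?thesis
      using a b by (simp add: abs_triangle_ineq divide_right_mono)
  qed
  have "(\<Sum>i\<in>UNIV. (\<bar>(u + v) $ i\<bar> / (a + b)) powr p)
      \<le> (\<Sum>i\<in>UNIV. ((1 - t) * (\<bar>u $ i\<bar> / a) + t * (\<bar>v $ i\<bar> / b)) powr p)"
    using split p a b by (intro sum_mono powr_mono2) auto
  also have "\<dots> \<le> (\<Sum>i\<in>UNIV. (1 - t) * (\<bar>u $ i\<bar> / a) powr p + t * (\<bar>v $ i\<bar> / b) powr p)"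
    using convex_onD[OF convex_on_powr_nonneg[OF p], of t "\<bar>u $ _\<bar> / a" "\<bar>v $ _\<bar> / b"] t a b
    by (intro sum_mono) simp
  also have "\<dots> = 1"
    using sum_powr_div_lqnorm[of p u] sum_powr_div_lqnorm[of p v] p a b
    by (simp add: sum.distrib sum_distrib_left[symmetric] a_def b_def)
  finally have "(\<Sum>i\<in>UNIV. \<bar>(u + v) $ i\<bar> powr p) \<le> (a + b) powr p"
    using a b by (simp add: powr_divide sum_divide_distrib[symmetric])
  then have "lqnorm (ereal p) (u + v) \<le> ((a + b) powr p) powr (1/p)"
    unfolding lqnorm_ereal using p by (intro powr_mono2) (auto simp: sum_nonneg)
  also have "\<dots> = a + b"
    using a b p by (simp add: powr_powr)
  finally show ?thesis
    by (simp add: a_def b_def)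
qed

lemma lqnorm_triangle:
  fixes u v :: "real^'n"
  assumes "1 \<le> q"
  shows "lqnorm q (u + v) \<le> lqnorm q u + lqnorm q v"
  using assms
proof (cases rule: one_le_ereal_cases)
  case 1
  obtain j where "lqnorm \<infinity> (u + v) = \<bar>(u + v) $ j\<bar>"
    using lqnorm_infinity_attained by blast
  also have "\<dots> \<le> \<bar>u $ j\<bar> + \<bar>v $ j\<bar>"
    by (simp add: abs_triangle_ineq)
  also have "\<dots> \<le> lqnorm \<infinity> u + lqnorm \<infinity> v"
    by (intro add_mono abs_le_lqnorm_infinity)
  finally show ?thesis
    using 1 by simp
next
  case (2 p)
  then show ?thesis
    using lqnorm_triangle_ereal by simp
qed

lemma sum_abs_le_card_powr_lqnorm:
  fixes h :: "real^'n"
  assumes "1 \<le> q"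
  shows "(\<Sum>i\<in>S. \<bar>h $ i\<bar>) \<le> real (card S) powr qexp q * lqnorm q h"
  using assms
proof (cases rule: one_le_ereal_cases)
  case 1
  have "(\<Sum>i\<in>S. \<bar>h $ i\<bar>) \<le> (\<Sum>i\<in>S. lqnorm \<infinity> h)"
    by (intro sum_mono abs_le_lqnorm_infinity)
  then show ?thesis
    using 1 by (cases "card S = 0") (auto simp: qexp_def)
next
  case (2 p)
  have "(\<Sum>i\<in>S. \<bar>h $ i\<bar>) \<le> real (card S) powr (1 - 1/p) * (\<Sum>i\<in>S. \<bar>h $ i\<bar> powr p) powr (1/p)"
    using 2 by (intro sum_le_card_powr_mult_sum_powr) auto
  also have "\<dots> \<le> real (card S) powr (1 - 1/p) * (\<Sum>i\<in>UNIV. \<bar>h $ i\<bar> powr p) powr (1/p)"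
    using 2 by (intro mult_left_mono powr_mono2 sum_mono2) (auto simp: sum_nonneg)
  finally show ?thesis
    using 2 by (simp add: lqnorm_ereal qexp_def)
qed

lemma qconj_pos: "1 < q \<Longrightarrow> qconj q > 0"
  by (cases q) (auto simp: qconj_def)

lemma qconj_mult_qexp: "1 < q \<Longrightarrow> qconj q * qexp q = 1"
  by (cases q) (auto simp: qconj_def qexp_def field_simps)

lemma l1norm_nonneg: "l1norm (z::real^'n) \<ge> 0"
  by (simp add: l1norm_def sum_nonneg)

lemma l1norm_split: "l1norm (z::real^'n) = (\<Sum>i\<in>S. \<bar>z $ i\<bar>) + (\<Sum>i\<in>-S. \<bar>z $ i\<bar>)"
  unfolding l1norm_def by (metis Compl_eq_Diff_UNIV add.commute finite subset_UNIV sum.subset_diff)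

lemma sq_powr_qexp:
  assumes "1 < q"
  shows "sq q z powr qexp q = l1norm z / lqnorm q z"
  using qconj_mult_qexp[OF assms] by (simp add: sq_def powr_powr l1norm_nonneg lqnorm_nonneg)

lemma sq_le_powr_qconj:
  assumes "1 < q" "z \<noteq> 0" "l1norm z \<le> c * lqnorm q z"
  shows "sq q z \<le> c powr qconj q"
proof -
  have "lqnorm q z > 0"
    using assms by (simp add: lqnorm_pos)
  then have "l1norm z / lqnorm q z \<le> c"
    using assms(3) by (simp add: divide_le_eq)
  then show ?thesis
    unfolding sq_def using qconj_pos[OF assms(1)] \<open>lqnorm q z > 0\<close>
    by (intro powr_mono2) (auto simp: l1norm_nonneg)
qed

lemma rho_le:
  assumes "z \<noteq> 0" "sq q z \<le> s"
  shows "rho q s A \<le> norm (A *v z) / lqnorm q z"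
  unfolding rho_def using assms
  by (intro cInf_lower) (auto intro!: bdd_belowI[where m=0] simp: lqnorm_nonneg)

lemma rho_mult_lqnorm_le:
  assumes "1 < q" "l1norm z \<le> c * lqnorm q z"
  shows "rho q (c powr qconj q) A * lqnorm q z \<le> norm (A *v z)"
proof (cases "z = 0")
  case False
  then have "rho q (c powr qconj q) A \<le> norm (A *v z) / lqnorm q z"
    using assms by (intro rho_le sq_le_powr_qconj)
  then show ?thesis
    using lqnorm_pos[of q z] assms(1) False by (simp add: le_divide_eq)
qed simp

lemma l1norm_le_of_ratio_le:
  fixes x xhat :: "real^'n"
  assumes q: "1 \<le> q" and "x \<noteq> 0" "xhat \<noteq> 0"
    and ratio: "l1norm xhat / lqnorm q xhat \<le> l1norm x / lqnorm q x"
  shows "l1norm xhat \<le> l1norm x + l1norm x / lqnorm q x * lqnorm q (xhat - x)"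
proof -
  have "lqnorm q x > 0" "lqnorm q xhat > 0"
    using assms by (simp_all add: lqnorm_pos)
  then have "l1norm xhat \<le> l1norm x / lqnorm q x * lqnorm q (x + (xhat - x))"
    using ratio by (simp add: divide_le_eq mult.commute)
  also have "\<dots> \<le> l1norm x / lqnorm q x * (lqnorm q x + lqnorm q (xhat - x))"
    using q by (intro mult_left_mono lqnorm_triangle) (auto simp: l1norm_nonneg lqnorm_nonneg)
  also have "\<dots> = l1norm x + l1norm x / lqnorm q x * lqnorm q (xhat - x)"
    using \<open>lqnorm q x > 0\<close> by (simp add: field_simps)
  finally show ?thesis .
qed

lemma l1norm_le_split_bound:
  fixes x h :: "real^'n"
  shows "l1norm h \<le> l1norm (x + h) - l1norm x + 2 * (\<Sum>i\<in>S. \<bar>h $ i\<bar>) + 2 * (\<Sum>i\<in>-S. \<bar>x $ i\<bar>)"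
proof -
  have "(\<Sum>i\<in>S. \<bar>x $ i\<bar> - \<bar>h $ i\<bar>) \<le> (\<Sum>i\<in>S. \<bar>(x + h) $ i\<bar>)"
    "(\<Sum>i\<in>-S. \<bar>h $ i\<bar> - \<bar>x $ i\<bar>) \<le> (\<Sum>i\<in>-S. \<bar>(x + h) $ i\<bar>)"
    by (intro sum_mono; simp; linarith)+
  then show ?thesis
    using l1norm_split[of "x + h" S] l1norm_split[of x S] l1norm_split[of h S]
    by (simp add: sum_subtractf)
qed

lemma l1norm_cone_bound:
  fixes x h z :: "real^'n"
  assumes q: "1 \<le> q"
    and opt: "l1norm (x + h) \<le> l1norm x + r * lqnorm q h"
    and sparse: "card {i. z $ i \<noteq> 0} \<le> k"
  shows "l1norm h \<le> (2 * real k powr qexp q + r) * lqnorm q h + 2 * l1norm (x - z)"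
proof -
  define S where "S = {i. z $ i \<noteq> 0}"
  have "(\<Sum>i\<in>S. \<bar>h $ i\<bar>) \<le> real (card S) powr qexp q * lqnorm q h"
    using q by (rule sum_abs_le_card_powr_lqnorm)
  also have "\<dots> \<le> real k powr qexp q * lqnorm q h"
    using sparse q
    by (intro mult_right_mono powr_mono2) (auto simp: S_def lqnorm_nonneg qexp_def elim: one_le_ereal_cases)
  finally have head: "(\<Sum>i\<in>S. \<bar>h $ i\<bar>) \<le> real k powr qexp q * lqnorm q h" .
  have "(\<Sum>i\<in>-S. \<bar>x $ i\<bar>) = (\<Sum>i\<in>-S. \<bar>(x - z) $ i\<bar>)"
    by (rule sum.cong) (auto simp: S_def)
  also have "\<dots> \<le> l1norm (x - z)"
    using l1norm_split[of "x - z" S] by (simp add: sum_nonneg)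
  finally have tail: "(\<Sum>i\<in>-S. \<bar>x $ i\<bar>) \<le> l1norm (x - z)" .
  show ?thesis
    using l1norm_le_split_bound[of h x S] opt head tail by (simp add: algebra_simps)
qed

lemma lqnorm_le_of_cone_bound:
  fixes A :: "real^'n^'m" and h :: "real^'n"
  assumes q: "1 < q" and K: "K > 0" and e: "e \<ge> 0"
    and \<rho>: "rho q ((4 * K + r) powr qconj q) A > 0"
    and cone: "l1norm h \<le> (2 * K + r) * lqnorm q h + 2 * e"
    and Ah: "norm (A *v h) \<le> 2 * \<eta>"
  shows "lqnorm q h \<le> 2 * \<eta> / rho q ((4 * K + r) powr qconj q) A + e / K"
proof -
  define \<rho> where "\<rho> = rho q ((4 * K + r) powr qconj q) A"
  have "\<rho> > 0"
    using \<rho> by (simp add: \<rho>_def)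
  have "\<eta> \<ge> 0"
    using Ah norm_ge_zero[of "A *v h"] by linarith
  have "lqnorm q h \<le> 2 * \<eta> / \<rho> + e / K"
  proof (cases "e \<le> K * lqnorm q h")
    case True
    with cone have "l1norm h \<le> (4 * K + r) * lqnorm q h"
      by (simp add: algebra_simps)
    then have "\<rho> * lqnorm q h \<le> 2 * \<eta>"
      using rho_mult_lqnorm_le[OF q] Ah unfolding \<rho>_def by (meson order_trans)
    then have "lqnorm q h \<le> 2 * \<eta> / \<rho>"
      using \<open>\<rho> > 0\<close> by (simp add: pos_le_divide_eq mult.commute)
    then show ?thesis
      using K e by (simp add: add_increasing2)
  next
    case False
    then have "lqnorm q h \<le> e / K"
      using K by (simp add: pos_le_divide_eq mult.commute)
    then show ?thesis
      using \<open>\<rho> > 0\<close> \<open>\<eta> \<ge> 0\<close> by (simp add: add_increasing)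
  qed
  then show ?thesis
    by (simp add: \<rho>_def)
qed

lemma le_plus_mult_sigma1:
  fixes x :: "real^'n"
  assumes c: "c > 0"
    and bound: "\<And>z. card {i. z $ i \<noteq> 0} \<le> k \<Longrightarrow> a \<le> b + c * l1norm (x - z)"
  shows "a \<le> b + c * sigma1 k x"
proof -
  have "(a - b) / c \<le> sigma1 k x"
    unfolding sigma1_def
  proof (rule cInf_greatest)
    show "{l1norm (x - z) |z. card {i. z $ i \<noteq> 0} \<le> k} \<noteq> {}"
      by (auto intro: exI[of _ 0])
  qed (use c in \<open>auto simp: divide_le_eq mult.commute dest!: bound\<close>)
  then show ?thesis
    using c by (simp add: divide_le_eq mult.commute)
qed

lemma norm_matrix_vector_diff_le:
  fixes A :: "real^'n^'m"
  assumes "y = A *v x + eps" "norm eps \<le> \<eta>" "norm (y - A *v xhat) \<le> \<eta>"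
  shows "norm (A *v (xhat - x)) \<le> 2 * \<eta>"
proof -
  have "A *v (xhat - x) = eps - (y - A *v xhat)"
    by (simp add: matrix_vector_mult_diff_distrib assms(1))
  then show ?thesis
    using norm_triangle_ineq4[of eps "y - A *v xhat"] assms(2,3) by simp
qed

lemma recovery_error_bounds:
  fixes A :: "real^'n^'m" and x h :: "real^'n" and q :: ereal and k :: nat and r \<eta> :: real
  defines "K \<equiv> real k powr qexp q"
    and "\<rho> \<equiv> rho q ((4 * real k powr qexp q + r) powr qconj q) A"
  assumes q: "1 < q" and "1 \<le> k" and "r \<ge> 0" and "\<rho> > 0"
    and opt: "l1norm (x + h) \<le> l1norm x + r * lqnorm q h"
    and Ah: "norm (A *v h) \<le> 2 * \<eta>"
  shows "lqnorm q h \<le> 2 * \<eta> / \<rho> + (1 / K) * sigma1 k x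
    \<and> l1norm h \<le> (4 * K + 2 * r) * \<eta> / \<rho> + (4 + r / K) * sigma1 k x"
proof
  have K: "K > 0"
    using \<open>1 \<le> k\<close> by (simp add: K_def)
  have cone: "l1norm h \<le> (2 * K + r) * lqnorm q h + 2 * l1norm (x - z)"
    if "card {i. z $ i \<noteq> 0} \<le> k" for z
    using l1norm_cone_bound[OF _ opt that] q by (simp add: K_def)
  show lq: "lqnorm q h \<le> 2 * \<eta> / \<rho> + (1 / K) * sigma1 k x"
    using K q \<open>\<rho> > 0\<close> unfolding \<rho>_def K_def[symmetric]
    by (intro le_plus_mult_sigma1)
      (auto simp: l1norm_nonneg intro: lqnorm_le_of_cone_bound[OF _ _ _ _ cone Ah])
  have "l1norm h \<le> (2 * K + r) * lqnorm q h + 2 * sigma1 k x"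
    by (intro le_plus_mult_sigma1) (auto dest: cone)
  also have "\<dots> \<le> (2 * K + r) * (2 * \<eta> / \<rho> + (1 / K) * sigma1 k x) + 2 * sigma1 k x"
    using lq K \<open>r \<ge> 0\<close> by (intro add_mono mult_left_mono) auto
  also have "\<dots> = (4 * K + 2 * r) * \<eta> / \<rho> + (4 + r / K) * sigma1 k x"
    using K by (simp add: field_simps)
  finally show "l1norm h \<le> (4 * K + 2 * r) * \<eta> / \<rho> + (4 + r / K) * sigma1 k x" .
qed

theorem theorem2:
  fixes A :: "real^'n^'m" and x xhat :: "real^'n" and eps y :: "real^'m"
    and \<eta> :: real and k :: nat and q :: ereal
  assumes "\<eta> \<ge> 0" and "x \<noteq> 0" and "1 \<le> k" and "k \<le> CARD('n)"
    and "y = A *v x + eps" and "norm eps \<le> \<eta>"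
    and "1 < q"
    and "rho q (Cq q k x) A > 0"
    and "xhat \<noteq> 0" and "norm (y - A *v xhat) \<le> \<eta>"
    and "\<forall>z. z \<noteq> 0 \<and> norm (y - A *v z) \<le> \<eta> \<longrightarrow>
            l1norm xhat / lqnorm q xhat \<le> l1norm z / lqnorm q z"
  shows "lqnorm q (xhat - x) \<le> 2 * \<eta> / rho q (Cq q k x) A
           + real k powr (- qexp q) * sigma1 k x
       \<and> l1norm (xhat - x) \<le>
           (4 * real k powr qexp q + 2 * sq q x powr qexp q) * \<eta> / rho q (Cq q k x) A
           + (4 + (sq q x / real k) powr qexp q) * sigma1 k x"
proof -
  define r where "r = sq q x powr qexp q"
  have r: "r = l1norm x / lqnorm q x"
    using sq_powr_qexp[OF \<open>1 < q\<close>] by (simp add: r_def)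
  have "l1norm xhat / lqnorm q xhat \<le> r"
    using assms(2,5,6,11) by (auto simp: r)
  then have "l1norm (x + (xhat - x)) \<le> l1norm x + r * lqnorm q (xhat - x)"
    using l1norm_le_of_ratio_le[of q x xhat] assms(2,7,9) by (simp add: r)
  moreover have "norm (A *v (xhat - x)) \<le> 2 * \<eta>"
    using assms(5,6,10) by (rule norm_matrix_vector_diff_le)
  moreover have "r \<ge> 0"
    by (simp add: r_def)
  moreover have "real k powr (- qexp q) = 1 / real k powr qexp q"
    by (simp add: powr_minus divide_inverse)
  ultimately show ?thesis
    using recovery_error_bounds[of q k r A x "xhat - x" \<eta>] assms(3,7,8)
    by (simp add: Cq_def r_def powr_divide)
qed

end
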